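(* Let $P$ be a finite poset and $p\in(0,1]$. For any order ideal $J'\in J(P)$ and any $t\ge 0$, \[ \mathbb{P}\big(T_{J(P)}(J')\ge t\big)\le \mathbb{P}\big(T(J(P))\ge t\big). \]
   Context: An order ideal of $P$ is a subset $I\subseteq P$ such that $x\in I$ and $y\le x$ imply $y\in I$. $J(P)$ is the lattice of order ideals of $P$ ordered by inclusion. The Ungarian Markov chain on $J(P)$ with parameter $p$ moves from an order ideal $I$ by deleting from $I$ a random subset of its maximal elements, each maximal element being deleted independently with probability $p$ (equivalently: for a finite lattice $L$, from $x$ choose each element covered by $x$ independently with probability $p$ and move to the meet of $x$ and the chosen elements). $T_{J(P)}(J')$ is the number of steps for this chain started at $J'$ to reach $\varnothing$, and $T(J(P))=T_{J(P)}(P)$. *)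

theory Defs
  imports "HOL-Probability.Probability"
begin

text \<open>A finite poset is modelled as a finite subset P of a type with a partial order;
  the order on P is the induced one.\<close>

definition order_ideals :: "'a::order set \<Rightarrow> 'a set set" where
  "order_ideals P = {I. I \<subseteq> P \<and> (\<forall>x\<in>I. \<forall>y\<in>P. y \<le> x \<longrightarrow> y \<in> I)}"

definition maximal_elems :: "'a::order set \<Rightarrow> 'a set" where
  "maximal_elems I = {x\<in>I. \<not> (\<exists>y\<in>I. x < y)}"

definition ungar_step :: "real \<Rightarrow> 'a::order set \<Rightarrow> 'a set pmf" where
  "ungar_step p I =
     map_pmf (\<lambda>b. I - {x\<in>maximal_elems I. b x})
             (Pi_pmf (maximal_elems I) False (\<lambda>_. bernoulli_pmf p))"

fun ungar_walk :: "real \<Rightarrow> 'a::order set \<Rightarrow> nat \<Rightarrow> 'a set list pmf" where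
  "ungar_walk p I 0 = return_pmf [I]"
| "ungar_walk p I (Suc n) =
     bind_pmf (ungar_walk p I n) (\<lambda>xs. map_pmf (\<lambda>y. xs @ [y]) (ungar_step p (last xs)))"

text \<open>Probability that the hitting time T(I) of the empty ideal satisfies T(I) \<ge> t,
  i.e. that X_k \<noteq> {} for all k < t.\<close>
definition hit_time_ge :: "real \<Rightarrow> 'a::order set \<Rightarrow> nat \<Rightarrow> real" where
  "hit_time_ge p I t =
     measure_pmf.prob (ungar_walk p I t) {xs. \<forall>k<t. xs ! k \<noteq> {}}"

end

theory Submission
  imports Defs
begin

text \<open>Drive one step of the chain from two nested sets I \<subseteq> I' by the same coin for every
  element: a maximal element of I' lying in I is maximal in I as well, so whatever survives
  from I also survives from I'. Hence one step preserves inclusion, and by induction on t,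
  via the first-step decomposition of the hitting probability, the chain started at the
  smaller set is no more likely to avoid the empty ideal for t steps.\<close>

lemma measure_bind_pmf:
  "measure (measure_pmf (bind_pmf M N)) X = (\<integral>x. measure (measure_pmf (N x)) X \<partial>measure_pmf M)"
  unfolding measure_pmf_bind
  by (rule measure_pmf.measure_bind[where N = "count_space UNIV"])
     (auto simp: space_subprob_algebra measure_pmf.subprob_space_axioms)

definition ungar_delete :: "('a \<Rightarrow> bool) \<Rightarrow> 'a::order set \<Rightarrow> 'a set" where
  "ungar_delete b I = I - {x\<in>maximal_elems I. b x}"

lemma ungar_delete_mono: "I \<subseteq> I' \<Longrightarrow> ungar_delete b I \<subseteq> ungar_delete b I'"
  by (auto simp: ungar_delete_def maximal_elems_def)

lemma ungar_step_via_Pi_pmf: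
  assumes "finite A" "I \<subseteq> A"
  shows "ungar_step p I = map_pmf (\<lambda>b. ungar_delete b I) (Pi_pmf A False (\<lambda>_. bernoulli_pmf p))"
proof -
  have "maximal_elems I \<subseteq> A"
    using assms(2) by (auto simp: maximal_elems_def)
  then show ?thesis
    unfolding ungar_step_def ungar_delete_def
    by (subst Pi_pmf_subset[OF assms(1)]) (auto simp: pmf.map_comp o_def intro!: map_pmf_cong)
qed

lemma ungar_walk_nonempty: "xs \<in> set_pmf (ungar_walk p I n) \<Longrightarrow> xs \<noteq> []"
  by (induction n arbitrary: xs) auto

lemma ungar_walk_Suc_first_step:
  "ungar_walk p I (Suc n) = bind_pmf (ungar_step p I) (\<lambda>J. map_pmf ((#) I) (ungar_walk p J n))"
proof (induction n)
  case 0
  then show ?case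
    by (simp add: map_pmf_def bind_return_pmf)
next
  case (Suc n)
  have extend: "bind_pmf (ungar_walk p J n)
      (\<lambda>xs. map_pmf (\<lambda>y. (I # xs) @ [y]) (ungar_step p (last (I # xs))))
    = map_pmf ((#) I) (ungar_walk p J (Suc n))" for J
  proof -
    have "bind_pmf (ungar_walk p J n)
        (\<lambda>xs. map_pmf (\<lambda>y. (I # xs) @ [y]) (ungar_step p (last (I # xs))))
      = bind_pmf (ungar_walk p J n)
        (\<lambda>xs. map_pmf ((#) I) (map_pmf (\<lambda>y. xs @ [y]) (ungar_step p (last xs))))"
      by (intro bind_pmf_cong refl) (auto simp: ungar_walk_nonempty pmf.map_comp o_def)
    then show ?thesis
      by (simp add: map_bind_pmf)
  qed
  have "ungar_walk p I (Suc (Suc n))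
      = bind_pmf (ungar_step p I) (\<lambda>J. bind_pmf (ungar_walk p J n)
          (\<lambda>xs. map_pmf (\<lambda>y. (I # xs) @ [y]) (ungar_step p (last (I # xs)))))"
    unfolding ungar_walk.simps(2)[of p I "Suc n"] Suc bind_assoc_pmf bind_map_pmf o_def list.sel
    by (rule refl)
  then show ?case
    by (simp only: extend)
qed

lemma hit_time_ge_0 [simp]: "hit_time_ge p I 0 = 1"
  by (simp add: hit_time_ge_def)

lemma hit_time_ge_nonneg: "0 \<le> hit_time_ge p I t"
  by (simp add: hit_time_ge_def)

lemma hit_time_ge_le_1: "hit_time_ge p I t \<le> 1"
  by (simp add: hit_time_ge_def)

lemma hit_time_ge_Suc:
  "hit_time_ge p I (Suc t) =
     (if I = {} then 0 else \<integral>J. hit_time_ge p J t \<partial>measure_pmf (ungar_step p I))"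
proof -
  have "(#) I -` {xs. \<forall>k<Suc t. xs ! k \<noteq> {}} =
      (if I = {} then {} else {xs. \<forall>k<t. xs ! k \<noteq> {}})"
    by (auto simp: All_less_Suc2)
  then show ?thesis
    unfolding hit_time_ge_def ungar_walk_Suc_first_step measure_bind_pmf measure_map_pmf
    by simp
qed

lemma hit_time_ge_mono:
  assumes "I \<subseteq> I'" "finite I'"
  shows "hit_time_ge p I t \<le> hit_time_ge p I' t"
  using assms
proof (induction t arbitrary: I I')
  case 0
  then show ?case by simp
next
  case (Suc t)
  show ?case
  proof (cases "I = {}")
    case True
    then show ?thesis
      by (simp add: hit_time_ge_Suc hit_time_ge_nonneg)
  next
    case False
    with Suc.prems have "I' \<noteq> {}" by auto
    let ?coins = "Pi_pmf I' False (\<lambda>_. bernoulli_pmf p)"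
    have "(\<integral>b. hit_time_ge p (ungar_delete b I) t \<partial>measure_pmf ?coins)
        \<le> (\<integral>b. hit_time_ge p (ungar_delete b I') t \<partial>measure_pmf ?coins)"
      using Suc.prems
      by (intro integral_mono measure_pmf.integrable_const_bound[where B = 1] Suc.IH ungar_delete_mono)
         (auto simp: hit_time_ge_nonneg hit_time_ge_le_1 ungar_delete_def)
    with False \<open>I' \<noteq> {}\<close> Suc.prems show ?thesis
      by (simp add: hit_time_ge_Suc ungar_step_via_Pi_pmf)
  qed
qed

theorem corollary2p4:
  fixes P :: "'a::order set" and J' :: "'a set" and p :: real and t :: nat
  assumes "finite P" and "0 < p" and "p \<le> 1" and "J' \<in> order_ideals P"
  shows "hit_time_ge p J' t \<le> hit_time_ge p P t"
  using hit_time_ge_mono[OF _ \<open>finite P\<close>] \<open>J' \<in> order_ideals P\<close>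
  by (auto simp: order_ideals_def)

end
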